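(* There is an absolute constant $A \geq 1$ such that the following holds. Let $\mathbb{V} = \{(ay+b,y,t) : (y,t) \in \mathbb{R}^{2}\}$ with $a,b \in \mathbb{R}$ be a vertical plane, and define $\pi_{\mathbb{V}} \colon \mathbb{H} \to \mathbb{W}$ by $\pi_{\mathbb{V}}(x,y,t) = (y, t + \tfrac{1}{2}xy - \tfrac{1}{2}ay^{2} - by)$. Then $\pi_{\mathbb{V}}$ maps horizontal lines contained in $\mathbb{V}$ onto horizontal lines in $\mathbb{W}$, and $\pi_{\mathbb{V}}|_{\mathbb{V}} \colon (\mathbb{V},d) \to (\mathbb{W},d_{\mathrm{par}})$ is $A(1+|a|)$-bilipschitz.
   Context: $\mathbb{H}$ is $\mathbb{R}^{3}$ with group law $(x_{1},y_{1},t_{1}) \cdot (x_{2},y_{2},t_{2}) = (x_{1}+x_{2},y_{1}+y_{2},t_{1}+t_{2}+\tfrac{1}{2}(x_{1}y_{2}-x_{2}y_{1}))$ and metric $d(p,q) = \|q^{-1}\cdot p\|$ with $\|(x,y,t)\| = \max\{\sqrt{x^{2}+y^{2}},\sqrt{|t|}\}$. A horizontal line in $\mathbb{H}$ is a set $p \cdot \{(sa',sb',0) : s \in \mathbb{R}\}$ with $(a',b') \neq 0$. $\mathbb{W}$ is $\mathbb{R}^{2}$ with $d_{\mathrm{par}}((y,t),(\xi,\tau)) = \max\{|y-\xi|,|t-\tau|^{1/2}\}$; horizontal lines in $\mathbb{W}$ are the sets $\mathbb{R} \times \{t\}$. *)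

theory Defs
  imports "HOL-Analysis.Analysis"
begin

type_synonym hpt = "real \<times> real \<times> real"

definition hmult :: "hpt \<Rightarrow> hpt \<Rightarrow> hpt" where
  "hmult p q = (case p of (x1,y1,t1) \<Rightarrow> case q of (x2,y2,t2) \<Rightarrow>
     (x1 + x2, y1 + y2, t1 + t2 + (1/2) * (x1 * y2 - x2 * y1)))"

definition hinv :: "hpt \<Rightarrow> hpt" where
  "hinv p = (case p of (x,y,t) \<Rightarrow> (-x, -y, -t))"

definition hnorm :: "hpt \<Rightarrow> real" where
  "hnorm p = (case p of (x,y,t) \<Rightarrow> max (sqrt (x^2 + y^2)) (sqrt \<bar>t\<bar>))"

definition hdist :: "hpt \<Rightarrow> hpt \<Rightarrow> real" where
  "hdist p q = hnorm (hmult (hinv q) p)"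

definition horizontal_line_H :: "hpt set \<Rightarrow> bool" where
  "horizontal_line_H L \<longleftrightarrow> (\<exists>p a' b'. (a', b') \<noteq> (0, 0) \<and>
      L = {hmult p (s * a', s * b', 0) | s. s \<in> (UNIV :: real set)})"

definition dpar :: "real \<times> real \<Rightarrow> real \<times> real \<Rightarrow> real" where
  "dpar p q = (case p of (y,t) \<Rightarrow> case q of (\<xi>,\<tau>) \<Rightarrow> max \<bar>y - \<xi>\<bar> (sqrt \<bar>t - \<tau>\<bar>))"

definition horizontal_line_W :: "(real \<times> real) set \<Rightarrow> bool" where
  "horizontal_line_W L \<longleftrightarrow> (\<exists>t. L = UNIV \<times> {t})"

definition vplane :: "real \<Rightarrow> real \<Rightarrow> hpt set" where
  "vplane a b = {(a * y + b, y, t) | y t. True}"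

definition piV :: "real \<Rightarrow> real \<Rightarrow> hpt \<Rightarrow> real \<times> real" where
  "piV a b p = (case p of (x,y,t) \<Rightarrow>
     (y, t + (1/2) * x * y - (1/2) * a * y^2 - b * y))"

definition bilipschitz_on :: "real \<Rightarrow> 'a set \<Rightarrow> ('a \<Rightarrow> 'a \<Rightarrow> real) \<Rightarrow> ('b \<Rightarrow> 'b \<Rightarrow> real) \<Rightarrow> ('a \<Rightarrow> 'b) \<Rightarrow> bool" where
  "bilipschitz_on L S d d' f \<longleftrightarrow>
     (\<forall>p\<in>S. \<forall>q\<in>S. d p q / L \<le> d' (f p) (f q) \<and> d' (f p) (f q) \<le> L * d p q)"

end

theory Submission
  imports Defs
begin

text \<open>Parametrise V by \<open>(y, t) \<mapsto> (a y + b, y, t)\<close>. In these coordinates \<open>\<pi>\<^sub>V\<close> is the shear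
  \<open>(y, t) \<mapsto> (y, t - b y / 2)\<close>, and both \<open>d\<close> on V and \<open>d\<^sub>p\<^sub>a\<^sub>r\<close> on the image become
  \<open>max (c \<bar>y - \<eta>\<bar>) (sqrt \<bar>t - \<tau> - b (y - \<eta>) / 2\<bar>)\<close>, with \<open>c = sqrt (1 + a\<^sup>2)\<close> for \<open>d\<close> and
  \<open>c = 1\<close> for \<open>d\<^sub>p\<^sub>a\<^sub>r\<close>. Since \<open>1 \<le> sqrt (1 + a\<^sup>2) \<le> 1 + \<bar>a\<bar>\<close>, the map is \<open>(1 + \<bar>a\<bar>)\<close>-bilipschitz.
  A horizontal line inside V has direction \<open>(a b', b', 0)\<close>, and along it the shear exactly
  cancels the growth of the \<open>t\<close>-coordinate, so its image is a line \<open>\<real> \<times> {t}\<close>.\<close>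

lemma piV_vplane: "piV a b (a * y + b, y, t) = (y, t - b * y / 2)"
  by (simp add: piV_def power2_eq_square algebra_simps)

lemma hdist_vplane:
  "hdist (a * y + b, y, t) (a * \<eta> + b, \<eta>, \<tau>) =
     max (sqrt (1 + a\<^sup>2) * \<bar>y - \<eta>\<bar>) (sqrt \<bar>t - \<tau> - b * (y - \<eta>) / 2\<bar>)"
proof -
  have horizontal: "(- (a * \<eta> + b) + (a * y + b))\<^sup>2 + (- \<eta> + y)\<^sup>2 = (1 + a\<^sup>2) * (y - \<eta>)\<^sup>2"
    by (simp add: power2_eq_square algebra_simps)
  have vertical: "- \<tau> + t + 1/2 * (- (a * \<eta> + b) * y - (a * y + b) * - \<eta>) = t - \<tau> - b * (y - \<eta>) / 2"
    by (simp add: field_simps)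
  show ?thesis
    unfolding hdist_def hinv_def hmult_def hnorm_def
    by (simp only: prod.case horizontal vertical real_sqrt_mult real_sqrt_abs)
qed

lemma dpar_piV_vplane:
  "dpar (piV a b (a * y + b, y, t)) (piV a b (a * \<eta> + b, \<eta>, \<tau>)) =
     max \<bar>y - \<eta>\<bar> (sqrt \<bar>t - \<tau> - b * (y - \<eta>) / 2\<bar>)"
proof -
  have "t - b * y / 2 - (\<tau> - b * \<eta> / 2) = t - \<tau> - b * (y - \<eta>) / 2"
    by (simp add: field_simps)
  then show ?thesis
    unfolding piV_vplane dpar_def by (simp only: prod.case)
qed

lemma sqrt_one_plus_square_le: "sqrt (1 + a\<^sup>2) \<le> 1 + \<bar>a\<bar>"
proof -
  have "1 + a\<^sup>2 \<le> (1 + \<bar>a\<bar>)\<^sup>2"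
    by (simp add: power2_eq_square algebra_simps)
  then show ?thesis
    using real_sqrt_le_mono by fastforce
qed

lemma max_scaled_bounds:
  fixes c L u v :: real
  assumes "1 \<le> c" "c \<le> L" "0 \<le> u" "0 \<le> v"
  shows "max u v \<le> max (c * u) v" and "max (c * u) v \<le> L * max u v"
proof -
  have "u \<le> c * u" "c * u \<le> L * u" "v \<le> L * v"
    using assms mult_right_mono[of 1 c u] mult_right_mono[of c L u] mult_right_mono[of 1 L v]
    by auto
  moreover have "L * u \<le> L * max u v" "L * v \<le> L * max u v"
    using assms by (simp_all add: mult_left_mono)
  ultimately show "max u v \<le> max (c * u) v" "max (c * u) v \<le> L * max u v"
    by auto
qed

lemma bilipschitz_on_piV_vplane:
  "bilipschitz_on (1 + \<bar>a\<bar>) (vplane a b) hdist dpar (piV a b)"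
  unfolding bilipschitz_on_def
proof (intro ballI)
  fix p q assume "p \<in> vplane a b" "q \<in> vplane a b"
  then obtain y t \<eta> \<tau> where p: "p = (a * y + b, y, t)" and q: "q = (a * \<eta> + b, \<eta>, \<tau>)"
    unfolding vplane_def by blast
  define L where "L = 1 + \<bar>a\<bar>"
  define c where "c = sqrt (1 + a\<^sup>2)"
  define u where "u = \<bar>y - \<eta>\<bar>"
  define v where "v = sqrt \<bar>t - \<tau> - b * (y - \<eta>) / 2\<bar>"
  have d: "hdist p q = max (c * u) v"
    unfolding p q hdist_vplane c_def u_def v_def ..
  have dpar: "dpar (piV a b p) (piV a b q) = max u v"
    unfolding p q dpar_piV_vplane u_def v_def ..
  have "1 \<le> c" "c \<le> L" "0 \<le> u" "0 \<le> v"
    using sqrt_one_plus_square_le by (auto simp: L_def c_def u_def v_def)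
  note bounds = max_scaled_bounds[OF this]
  have "max (c * u) v \<le> L * max (c * u) v"
    using \<open>0 \<le> v\<close> by (simp add: L_def algebra_simps)
  with bounds(1) have "max u v \<le> L * max (c * u) v"
    by linarith
  moreover have "max (c * u) v / L \<le> max u v"
    using bounds(2) by (simp add: L_def divide_le_eq mult.commute add_pos_nonneg)
  ultimately show "hdist p q / L \<le> dpar (piV a b p) (piV a b q) \<and>
                   dpar (piV a b p) (piV a b q) \<le> L * hdist p q"
    unfolding d dpar by simp
qed

lemma horizontal_line_in_vplane:
  assumes "horizontal_line_H L" "L \<subseteq> vplane a b"
  obtains y\<^sub>0 t\<^sub>0 \<beta> where "\<beta> \<noteq> 0"
    and "L = {hmult (a * y\<^sub>0 + b, y\<^sub>0, t\<^sub>0) (s * (a * \<beta>), s * \<beta>, 0) | s. s \<in> (UNIV :: real set)}"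
proof -
  obtain p \<alpha> \<beta> where ne: "(\<alpha>, \<beta>) \<noteq> (0, 0)"
    and L_p: "L = {hmult p (s * \<alpha>, s * \<beta>, 0) | s. s \<in> (UNIV :: real set)}"
    using assms(1) unfolding horizontal_line_H_def by blast
  obtain x\<^sub>0 y\<^sub>0 t\<^sub>0 where "p = (x\<^sub>0, y\<^sub>0, t\<^sub>0)"
    by (cases p)
  with L_p have L: "L = {hmult (x\<^sub>0, y\<^sub>0, t\<^sub>0) (s * \<alpha>, s * \<beta>, 0) | s. s \<in> (UNIV :: real set)}"
    by simp
  have "\<And>s. x\<^sub>0 + s * \<alpha> = a * (y\<^sub>0 + s * \<beta>) + b"
    using assms(2) unfolding L vplane_def hmult_def by auto
  from this[of 0] this[of 1] have "x\<^sub>0 = a * y\<^sub>0 + b" "\<alpha> = a * \<beta>"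
    by (simp_all add: algebra_simps)
  with ne L that show ?thesis
    by auto
qed

lemma piV_image_horizontal_line:
  assumes "horizontal_line_H L" "L \<subseteq> vplane a b"
  shows "horizontal_line_W (piV a b ` L)"
proof -
  obtain y\<^sub>0 t\<^sub>0 \<beta> where "\<beta> \<noteq> 0"
    and L: "L = {hmult (a * y\<^sub>0 + b, y\<^sub>0, t\<^sub>0) (s * (a * \<beta>), s * \<beta>, 0) | s. s \<in> (UNIV :: real set)}"
    using horizontal_line_in_vplane[OF assms] .
  have image: "piV a b (hmult (a * y\<^sub>0 + b, y\<^sub>0, t\<^sub>0) (s * (a * \<beta>), s * \<beta>, 0)) =
      (y\<^sub>0 + s * \<beta>, t\<^sub>0 - b * y\<^sub>0 / 2)" for s
    by (simp add: hmult_def piV_def power2_eq_square field_simps)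
  have "(w, t\<^sub>0 - b * y\<^sub>0 / 2) \<in> piV a b ` L" for w
  proof -
    have "(w, t\<^sub>0 - b * y\<^sub>0 / 2) =
        piV a b (hmult (a * y\<^sub>0 + b, y\<^sub>0, t\<^sub>0) (((w - y\<^sub>0) / \<beta>) * (a * \<beta>), ((w - y\<^sub>0) / \<beta>) * \<beta>, 0))"
      using image[of "(w - y\<^sub>0) / \<beta>"] \<open>\<beta> \<noteq> 0\<close> by simp
    moreover have "hmult (a * y\<^sub>0 + b, y\<^sub>0, t\<^sub>0) (((w - y\<^sub>0) / \<beta>) * (a * \<beta>), ((w - y\<^sub>0) / \<beta>) * \<beta>, 0) \<in> L"
      unfolding L by blast
    ultimately show ?thesis
      by (rule image_eqI)
  qed
  then have "piV a b ` L = UNIV \<times> {t\<^sub>0 - b * y\<^sub>0 / 2}"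
    unfolding L using image by auto
  then show ?thesis
    unfolding horizontal_line_W_def by blast
qed

theorem lemma4p13:
  shows "\<exists>A::real. A \<ge> 1 \<and> (\<forall>a b::real.
     (\<forall>L. horizontal_line_H L \<and> L \<subseteq> vplane a b \<longrightarrow> horizontal_line_W (piV a b ` L)) \<and>
     bilipschitz_on (A * (1 + \<bar>a\<bar>)) (vplane a b) hdist dpar (piV a b))"
  using piV_image_horizontal_line bilipschitz_on_piV_vplane by (intro exI[of _ 1]) auto

end
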